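(* (i) For every $\mathbb G$-stopping time $\hat\sigma$ with values in $[0,T]$ there exists an $\mathbb F$-stopping time $\sigma$ with values in $[0,T]$ such that $\hat X_{\hat\sigma}=\hat X_{\sigma\wedge\vartheta}=\hat X_\sigma$. (ii) For every $\mathbb F$-stopping time $\sigma$ with values in $[0,T]$ there exists an $\mathbb F^\sigma$-optional process $x(\sigma)$ such that $\hat X_\sigma=x_\vartheta(\sigma)$.
   Context: Let $(\Omega,\mathcal G,\mathbb P)$ be a probability space with a filtration $\mathbb F=(\mathcal F_t)$ satisfying the usual conditions, $\vartheta$ a strictly positive finite random time and $\mathbb G$ the progressive enlargement of $\mathbb F$ by $\vartheta$ (smallest right-continuous filtration containing $\mathbb F$ making $\vartheta$ a stopping time). Fix $T>0$. $P,R$ are bounded $\mathbb F$-optional processes and the payoff process is $\hat X=P\mathbb 1_{[\![0,\vartheta[\![}+R_\vartheta\mathbb 1_{[\![\vartheta,\infty[\![}$. For an $\mathbb F$-stopping time $\sigma$, $\mathbb F^\sigma=(\mathcal F_{\sigma\wedge t})_{t\ge0}$ is the stopped filtration, and $x_\vartheta(\sigma)$ denotes the process $x(\sigma)$ evaluated at time $\vartheta$. *)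

theory Defs
  imports "HOL-Probability.Probability"
begin

text \<open>Time is real and only t \<ge> 0 matters; filtrations are maps real \<Rightarrow> measure
  (only their sigma-algebras, i.e. sets, are used). Stopping times are the library's
  stopping_time (which for nonnegative times only constrains t \<ge> 0).\<close>

definition filtration_on :: "'a set \<Rightarrow> (real \<Rightarrow> 'a measure) \<Rightarrow> bool" where
  "filtration_on \<Omega> F \<longleftrightarrow> (\<forall>t\<ge>0. space (F t) = \<Omega>) \<and>
     (\<forall>s t. 0 \<le> s \<longrightarrow> s \<le> t \<longrightarrow> sets (F s) \<subseteq> sets (F t))"

definition right_continuous_filtration :: "(real \<Rightarrow> 'a measure) \<Rightarrow> bool" where
  "right_continuous_filtration F \<longleftrightarrow>
     (\<forall>t\<ge>0. sets (F t) = (\<Inter>s\<in>{t<..}. sets (F s)))"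

definition usual_conditions :: "'a measure \<Rightarrow> (real \<Rightarrow> 'a measure) \<Rightarrow> bool" where
  "usual_conditions M F \<longleftrightarrow> filtration_on (space M) F \<and>
     (\<forall>t\<ge>0. sets (F t) \<subseteq> sets M) \<and> right_continuous_filtration F \<and>
     (\<forall>N. N \<subseteq> space M \<longrightarrow> (\<exists>A\<in>null_sets M. N \<subseteq> A) \<longrightarrow> N \<in> sets (F 0))"

definition prog_enlargement ::
  "'a set \<Rightarrow> (real \<Rightarrow> 'a measure) \<Rightarrow> ('a \<Rightarrow> real) \<Rightarrow> real \<Rightarrow> 'a measure" where
  "prog_enlargement \<Omega> F \<theta> t = sigma \<Omega>
     (\<Inter>{sets (H t) | H. filtration_on \<Omega> H \<and> right_continuous_filtration H \<and>
          (\<forall>s\<ge>0. sets (F s) \<subseteq> sets (H s)) \<and> stopping_time H \<theta>})"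

definition optional_measure :: "'a set \<Rightarrow> (real \<Rightarrow> 'a measure) \<Rightarrow> (real \<times> 'a) measure" where
  "optional_measure \<Omega> F = sigma ({0..} \<times> \<Omega>)
     {{(t, \<omega>). 0 \<le> t \<and> \<omega> \<in> \<Omega> \<and> \<tau> \<omega> \<le> t} | \<tau>.
        stopping_time F \<tau> \<and> (\<forall>\<omega>\<in>\<Omega>. 0 \<le> \<tau> \<omega>)}"

definition optional_process :: "'a set \<Rightarrow> (real \<Rightarrow> 'a measure) \<Rightarrow> (real \<Rightarrow> 'a \<Rightarrow> real) \<Rightarrow> bool" where
  "optional_process \<Omega> F X \<longleftrightarrow> (\<lambda>p. X (fst p) (snd p)) \<in> borel_measurable (optional_measure \<Omega> F)"

definition bounded_process :: "'a set \<Rightarrow> (real \<Rightarrow> 'a \<Rightarrow> real) \<Rightarrow> bool" where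
  "bounded_process \<Omega> X \<longleftrightarrow> (\<exists>C. \<forall>t\<ge>0. \<forall>\<omega>\<in>\<Omega>. \<bar>X t \<omega>\<bar> \<le> C)"

definition stopped_sigma :: "'a set \<Rightarrow> (real \<Rightarrow> 'a measure) \<Rightarrow> ('a \<Rightarrow> real) \<Rightarrow> 'a measure" where
  "stopped_sigma \<Omega> F \<tau> = sigma \<Omega> {A. A \<subseteq> \<Omega> \<and> (\<forall>u\<ge>0. {\<omega>\<in>A. \<tau> \<omega> \<le> u} \<in> sets (F u))}"

definition stopped_filtration :: "'a set \<Rightarrow> (real \<Rightarrow> 'a measure) \<Rightarrow> ('a \<Rightarrow> real) \<Rightarrow> real \<Rightarrow> 'a measure" where
  "stopped_filtration \<Omega> F \<sigma> t = stopped_sigma \<Omega> F (\<lambda>\<omega>. min (\<sigma> \<omega>) t)"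

text \<open>Payoff process Xhat = P 1_[[0,\<theta>[[ + R_\<theta> 1_[[\<theta>,\<infinity>[[.\<close>
definition payoff :: "(real \<Rightarrow> 'a \<Rightarrow> real) \<Rightarrow> (real \<Rightarrow> 'a \<Rightarrow> real) \<Rightarrow> ('a \<Rightarrow> real) \<Rightarrow> real \<Rightarrow> 'a \<Rightarrow> real" where
  "payoff P R \<theta> t \<omega> = (if t < \<theta> \<omega> then P t \<omega> else R (\<theta> \<omega>) \<omega>)"

end

theory Submission
  imports Defs
begin

text \<open>
  (i) Before \<theta> the enlarged filtration carries no information beyond F: the sets that agree
  on {t < \<theta>} with some F_s-set, for every s > t, form a right-continuous filtration containing F
  for which \<theta> is a stopping time, so they contain G_t. Hence for a G-stopping time \<tau> and each
  rational q there is A_q in F_q equal to {\<tau> < q} on {q < \<theta>}, and \<sigma> = min T (inf {q. \<omega> \<in> A_q})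
  is an F-stopping time (F is right-continuous) with min \<sigma> \<theta> = min \<tau> \<theta>. The payoff at a time u
  only depends on min u \<theta>.

  (ii) Take x t = P (min t \<sigma>) on ]]\<sigma>, \<infinity>[[ and x t = R (min t \<sigma>) elsewhere. It is optional for
  the stopped filtration F^\<sigma> because (t, \<omega>) \<mapsto> (min t (\<sigma> \<omega>), \<omega>) pulls F-optional sets back to
  F^\<sigma>-optional ones: the preimage of [[\<rho>, \<infinity>[[ is [[\<rho>', \<infinity>[[ for the F^\<sigma>-stopping time \<rho>'
  equal to \<rho> on {\<rho> \<le> \<sigma>} and to \<infinity> elsewhere.

  All identities hold pointwise on the sample space, so the almost-sure statements are immediate.
\<close>

lemma filtration_on_space: "filtration_on \<Omega> F \<Longrightarrow> 0 \<le> t \<Longrightarrow> space (F t) = \<Omega>"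
  by (simp add: filtration_on_def)

lemma filtration_on_mono:
  "filtration_on \<Omega> F \<Longrightarrow> 0 \<le> s \<Longrightarrow> s \<le> t \<Longrightarrow> A \<in> sets (F s) \<Longrightarrow> A \<in> sets (F t)"
  unfolding filtration_on_def by blast

lemma filtration_on_sets_into_space:
  "filtration_on \<Omega> F \<Longrightarrow> 0 \<le> t \<Longrightarrow> A \<in> sets (F t) \<Longrightarrow> A \<subseteq> \<Omega>"
  by (metis filtration_on_space sets.sets_into_space)

lemma stopping_time_le_sets:
  assumes F: "filtration_on \<Omega> F" and \<sigma>: "stopping_time F \<sigma>" and "0 \<le> s" "s \<le> t"
  shows "{\<omega>\<in>\<Omega>. \<sigma> \<omega> \<le> s} \<in> sets (F t)"
proof -
  have "{\<omega>\<in>\<Omega>. \<sigma> \<omega> \<le> s} \<in> sets (F s)"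
    using stopping_timeD[OF \<sigma>, of s] by (simp add: pred_def filtration_on_space[OF F \<open>0 \<le> s\<close>])
  then show ?thesis by (rule filtration_on_mono[OF F assms(3,4)])
qed

text \<open>The library's filtration locale needs all real times: extend F constantly to t < 0.\<close>

lemma filtration_max_0: "filtration_on \<Omega> F \<Longrightarrow> filtration \<Omega> (\<lambda>t. F (max 0 t))"
  unfolding filtration_def filtration_on_def by auto

lemma stopping_time_max_0:
  assumes F: "filtration_on \<Omega> F" and \<tau>: "stopping_time F \<tau>" and pos: "\<forall>\<omega>\<in>\<Omega>. 0 \<le> \<tau> \<omega>"
  shows "stopping_time (\<lambda>t. F (max 0 t)) \<tau>"
proof
  fix t :: real
  have "{\<omega>\<in>\<Omega>. \<tau> \<omega> \<le> t} \<in> sets (F (max 0 t))"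
  proof (cases "t < 0")
    case True
    then have "{\<omega>\<in>\<Omega>. \<tau> \<omega> \<le> t} = {}" using pos by force
    then show ?thesis by (metis sets.empty_sets)
  qed (use stopping_time_le_sets[OF F \<tau>] in simp)
  then show "Measurable.pred (F (max 0 t)) (\<lambda>\<omega>. \<tau> \<omega> \<le> t)"
    by (simp add: pred_def filtration_on_space[OF F])
qed

lemma stopping_time_less_le_sets:
  assumes F: "filtration_on \<Omega> F" and \<sigma>: "stopping_time F \<sigma>" and \<rho>: "stopping_time F \<rho>"
    and pos: "\<forall>\<omega>\<in>\<Omega>. 0 \<le> \<sigma> \<omega>" "\<forall>\<omega>\<in>\<Omega>. 0 \<le> \<rho> \<omega>" and t: "0 \<le> t"
  shows "{\<omega>\<in>\<Omega>. \<sigma> \<omega> < \<rho> \<omega> \<and> \<sigma> \<omega> \<le> t} \<in> sets (F t)"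
proof -
  interpret filtration \<Omega> "\<lambda>t. F (max 0 t)" using filtration_max_0[OF F] .
  have \<sigma>': "stopping_time (\<lambda>t. F (max 0 t)) \<sigma>" using stopping_time_max_0[OF F \<sigma> pos(1)] .
  have "{\<omega>\<in>\<Omega>. \<sigma> \<omega> < \<rho> \<omega>} \<in> sets (pre_sigma \<sigma>)"
    using stopping_time_less[OF \<sigma>' stopping_time_max_0[OF F \<rho> pos(2)]]
    by (simp add: pred_def space_pre_sigma)
  from sets_pre_sigmaD[OF \<sigma>' this, of t]
  have "{\<omega>\<in>{\<omega>\<in>\<Omega>. \<sigma> \<omega> < \<rho> \<omega>}. \<sigma> \<omega> \<le> t} \<in> sets (F t)" using t by simp
  moreover have "{\<omega>\<in>{\<omega>\<in>\<Omega>. \<sigma> \<omega> < \<rho> \<omega>}. \<sigma> \<omega> \<le> t} = {\<omega>\<in>\<Omega>. \<sigma> \<omega> < \<rho> \<omega> \<and> \<sigma> \<omega> \<le> t}"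
    by blast
  ultimately show ?thesis by simp
qed

lemma Collect_le_eq_Inter_less_Rats:
  fixes t s :: real
  assumes "t < s"
  shows "{\<omega>\<in>\<Omega>. \<sigma> \<omega> \<le> t} = (\<Inter>q\<in>\<rat> \<inter> {t<..<s}. {\<omega>\<in>\<Omega>. \<sigma> \<omega> < q})"
proof (intro equalityI subsetI)
  fix \<omega> assume \<omega>: "\<omega> \<in> (\<Inter>q\<in>\<rat> \<inter> {t<..<s}. {\<omega>\<in>\<Omega>. \<sigma> \<omega> < q})"
  have "\<sigma> \<omega> \<le> t"
  proof (rule ccontr)
    assume "\<not> \<sigma> \<omega> \<le> t"
    then obtain q where "q \<in> \<rat>" "t < q" "q < min (\<sigma> \<omega>) s"
      using Rats_dense_in_real[of t "min (\<sigma> \<omega>) s"] assms by auto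
    then have "q \<in> \<rat> \<inter> {t<..<s}" "q < \<sigma> \<omega>" by auto
    moreover from this(1) \<omega> have "\<sigma> \<omega> < q" by blast
    ultimately show False by simp
  qed
  moreover have "\<rat> \<inter> {t<..<s} \<noteq> {}" using Rats_dense_in_real[OF assms] by auto
  then have "\<omega> \<in> \<Omega>" using \<omega> by blast
  ultimately show "\<omega> \<in> {\<omega>\<in>\<Omega>. \<sigma> \<omega> \<le> t}" by simp
qed auto

lemma stopping_time_of_less_sets:
  assumes F: "filtration_on \<Omega> F" and rc: "right_continuous_filtration F"
    and pos: "\<And>\<omega>. 0 \<le> \<sigma> \<omega>" and less: "\<And>t. 0 \<le> t \<Longrightarrow> {\<omega>\<in>\<Omega>. \<sigma> \<omega> < t} \<in> sets (F t)"
  shows "stopping_time F \<sigma>"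
proof
  fix t :: real
  have le_sets: "{\<omega>\<in>\<Omega>. \<sigma> \<omega> \<le> t} \<in> sets (F s)" if t: "0 \<le> t" and s: "t < s" for s
    unfolding Collect_le_eq_Inter_less_Rats[OF s]
  proof (rule sets.countable_INT')
    show "countable (\<rat> \<inter> {t<..<s})" by (simp add: countable_rat)
    show "\<rat> \<inter> {t<..<s} \<noteq> {}" using Rats_dense_in_real[OF s] by auto
    show "(\<lambda>q. {\<omega>\<in>\<Omega>. \<sigma> \<omega> < q}) ` (\<rat> \<inter> {t<..<s}) \<subseteq> sets (F s)"
    proof (rule image_subsetI)
      fix q assume "q \<in> \<rat> \<inter> {t<..<s}"
      then have "0 \<le> q" "q \<le> s" using t by auto
      then show "{\<omega>\<in>\<Omega>. \<sigma> \<omega> < q} \<in> sets (F s)"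
        using filtration_on_mono[OF F _ _ less] by blast
    qed
  qed
  show "Measurable.pred (F t) (\<lambda>\<omega>. \<sigma> \<omega> \<le> t)"
  proof (cases "t < 0")
    case True
    then have "\<not> \<sigma> \<omega> \<le> t" for \<omega> using pos[of \<omega>] by linarith
    then show ?thesis by (simp add: pred_def)
  next
    case False
    then have "{\<omega>\<in>\<Omega>. \<sigma> \<omega> \<le> t} \<in> (\<Inter>s\<in>{t<..}. sets (F s))"
      using le_sets by simp
    moreover have "sets (F t) = (\<Inter>s\<in>{t<..}. sets (F s))"
      using rc False unfolding right_continuous_filtration_def by simp
    ultimately have "{\<omega>\<in>\<Omega>. \<sigma> \<omega> \<le> t} \<in> sets (F t)" by simp
    then show ?thesis using False by (simp add: pred_def filtration_on_space[OF F])
  qed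
qed

definition sets_before :: "'a set \<Rightarrow> (real \<Rightarrow> 'a measure) \<Rightarrow> ('a \<Rightarrow> real) \<Rightarrow> real \<Rightarrow> 'a set set" where
  "sets_before \<Omega> F \<theta> t =
     {A. A \<subseteq> \<Omega> \<and> (\<exists>A'\<in>sets (F t). \<forall>\<omega>\<in>\<Omega>. t < \<theta> \<omega> \<longrightarrow> (\<omega> \<in> A \<longleftrightarrow> \<omega> \<in> A'))}"

lemma sets_before_Pow: "sets_before \<Omega> F \<theta> t \<subseteq> Pow \<Omega>"
  by (auto simp: sets_before_def)

lemma sigma_algebra_sets_before:
  assumes F: "filtration_on \<Omega> F" and t: "0 \<le> t"
  shows "sigma_algebra \<Omega> (sets_before \<Omega> F \<theta> t)"
  unfolding sigma_algebra_iff2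
proof (intro conjI ballI allI impI)
  show "{} \<in> sets_before \<Omega> F \<theta> t"
    by (auto simp: sets_before_def intro!: bexI[of _ "{}"])
  fix A assume "A \<in> sets_before \<Omega> F \<theta> t"
  then obtain A' where "A' \<in> sets (F t)" "\<forall>\<omega>\<in>\<Omega>. t < \<theta> \<omega> \<longrightarrow> (\<omega> \<in> A \<longleftrightarrow> \<omega> \<in> A')"
    by (auto simp: sets_before_def)
  moreover have "\<Omega> - A' \<in> sets (F t)"
    using \<open>A' \<in> sets (F t)\<close> filtration_on_space[OF F t] sets.compl_sets by metis
  ultimately show "\<Omega> - A \<in> sets_before \<Omega> F \<theta> t"
    by (auto simp: sets_before_def intro!: bexI[of _ "\<Omega> - A'"])
next
  fix A :: "nat \<Rightarrow> 'a set" assume "range A \<subseteq> sets_before \<Omega> F \<theta> t"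
  then have "\<forall>i. \<exists>A'\<in>sets (F t). \<forall>\<omega>\<in>\<Omega>. t < \<theta> \<omega> \<longrightarrow> (\<omega> \<in> A i \<longleftrightarrow> \<omega> \<in> A')"
    and "\<And>i. A i \<subseteq> \<Omega>"
    by (auto simp: sets_before_def)
  then obtain A' where "\<And>i. A' i \<in> sets (F t)"
    and "\<And>i. \<forall>\<omega>\<in>\<Omega>. t < \<theta> \<omega> \<longrightarrow> (\<omega> \<in> A i \<longleftrightarrow> \<omega> \<in> A' i)"
    by metis
  moreover have "(\<Union>i. A i) \<subseteq> \<Omega>" using \<open>\<And>i. A i \<subseteq> \<Omega>\<close> by blast
  ultimately show "(\<Union>i. A i) \<in> sets_before \<Omega> F \<theta> t"
    by (auto simp: sets_before_def intro!: bexI[of _ "\<Union>i. A' i"])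
qed (rule sets_before_Pow)

lemma sets_before_of_sets: "filtration_on \<Omega> F \<Longrightarrow> 0 \<le> t \<Longrightarrow> A \<in> sets (F t) \<Longrightarrow> A \<in> sets_before \<Omega> F \<theta> t"
  using filtration_on_sets_into_space unfolding sets_before_def by blast

lemma sets_before_occurred: "{\<omega>\<in>\<Omega>. \<theta> \<omega> \<le> s} \<in> sets_before \<Omega> F \<theta> t" if "s \<le> t"
  using that by (auto simp: sets_before_def intro!: bexI[of _ "{}"])

lemma prog_enlargement_subset:
  assumes H: "filtration_on \<Omega> H" "right_continuous_filtration H"
    "\<forall>s\<ge>0. sets (F s) \<subseteq> sets (H s)" "stopping_time H \<theta>" and t: "0 \<le> t"
  shows "sets (prog_enlargement \<Omega> F \<theta> t) \<subseteq> sets (H t)"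
proof -
  let ?C = "{sets (H' t) | H'. filtration_on \<Omega> H' \<and> right_continuous_filtration H' \<and>
     (\<forall>s\<ge>0. sets (F s) \<subseteq> sets (H' s)) \<and> stopping_time H' \<theta>}"
  have "sets (H t) \<in> ?C" by (intro CollectI exI[of _ H]) (simp add: H)
  then have C: "\<Inter>?C \<subseteq> sets (H t)" by (rule Inter_lower)
  have \<Omega>: "space (H t) = \<Omega>" using filtration_on_space[OF H(1) t] .
  have "sets (prog_enlargement \<Omega> F \<theta> t) = sigma_sets \<Omega> (\<Inter>?C)"
    unfolding prog_enlargement_def
    using C sets.space_closed[of "H t"] \<Omega> by (intro sets_measure_of) auto
  also have "\<dots> \<subseteq> sets (H t)" using sets.sigma_sets_subset[OF C] \<Omega> by simp
  finally show ?thesis .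
qed

definition before_filtration :: "'a set \<Rightarrow> (real \<Rightarrow> 'a measure) \<Rightarrow> ('a \<Rightarrow> real) \<Rightarrow> real \<Rightarrow> 'a measure" where
  "before_filtration \<Omega> F \<theta> t = sigma \<Omega> (\<Inter>s\<in>{t<..}. sets_before \<Omega> F \<theta> s)"

lemma before_filtration_generator_Pow: "(\<Inter>s\<in>{t<..}. sets_before \<Omega> F \<theta> s) \<subseteq> Pow \<Omega>"
proof -
  have "(\<Inter>s\<in>{t<..}. sets_before \<Omega> F \<theta> s) \<subseteq> sets_before \<Omega> F \<theta> (t + 1)" by auto
  then show ?thesis using sets_before_Pow by (rule order_trans)
qed

lemma sets_before_filtration:
  "sets (before_filtration \<Omega> F \<theta> t) = sigma_sets \<Omega> (\<Inter>s\<in>{t<..}. sets_before \<Omega> F \<theta> s)"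
  unfolding before_filtration_def using before_filtration_generator_Pow by (rule sets_measure_of)

lemma space_before_filtration: "space (before_filtration \<Omega> F \<theta> t) = \<Omega>"
  unfolding before_filtration_def using before_filtration_generator_Pow by (rule space_measure_of)

lemma before_filtration_in_sets_before:
  assumes "filtration_on \<Omega> F" "0 \<le> t" "t < s"
  shows "sets (before_filtration \<Omega> F \<theta> t) \<subseteq> sets_before \<Omega> F \<theta> s"
  unfolding sets_before_filtration
  using assms by (intro sigma_algebra.sigma_sets_subset[OF sigma_algebra_sets_before]) auto

lemma before_filtration_setsI:
  "(\<And>s. t < s \<Longrightarrow> A \<in> sets_before \<Omega> F \<theta> s) \<Longrightarrow> A \<in> sets (before_filtration \<Omega> F \<theta> t)"
  unfolding sets_before_filtration by auto

lemma before_filtration_mono: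
  "s \<le> t \<Longrightarrow> sets (before_filtration \<Omega> F \<theta> s) \<subseteq> sets (before_filtration \<Omega> F \<theta> t)"
  unfolding sets_before_filtration by (intro sigma_sets_mono') auto

lemma filtration_on_before_filtration: "filtration_on \<Omega> (before_filtration \<Omega> F \<theta>)"
  unfolding filtration_on_def by (simp add: space_before_filtration before_filtration_mono)

lemma right_continuous_before_filtration:
  assumes F: "filtration_on \<Omega> F"
  shows "right_continuous_filtration (before_filtration \<Omega> F \<theta>)"
  unfolding right_continuous_filtration_def
proof (intro allI impI equalityI)
  fix t :: real assume t: "0 \<le> t"
  show "sets (before_filtration \<Omega> F \<theta> t) \<subseteq> (\<Inter>s\<in>{t<..}. sets (before_filtration \<Omega> F \<theta> s))"
    by (rule INT_greatest, rule before_filtration_mono) simp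
  show "(\<Inter>s\<in>{t<..}. sets (before_filtration \<Omega> F \<theta> s)) \<subseteq> sets (before_filtration \<Omega> F \<theta> t)"
  proof (intro subsetI before_filtration_setsI)
    fix A s assume "A \<in> (\<Inter>s\<in>{t<..}. sets (before_filtration \<Omega> F \<theta> s))" and "t < s"
    then have "A \<in> sets (before_filtration \<Omega> F \<theta> ((t + s) / 2))" by auto
    then show "A \<in> sets_before \<Omega> F \<theta> s"
      using before_filtration_in_sets_before[OF F, of "(t + s) / 2" s] t \<open>t < s\<close> by auto
  qed
qed

lemma sets_subset_before_filtration:
  assumes F: "filtration_on \<Omega> F" and s: "0 \<le> s"
  shows "sets (F s) \<subseteq> sets (before_filtration \<Omega> F \<theta> s)"
proof (intro subsetI before_filtration_setsI)
  fix A r assume "A \<in> sets (F s)" "s < r"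
  then show "A \<in> sets_before \<Omega> F \<theta> r"
    using sets_before_of_sets[OF F] filtration_on_mono[OF F] s by (meson less_imp_le order_trans)
qed

lemma stopping_time_before_filtration: "stopping_time (before_filtration \<Omega> F \<theta>) \<theta>"
  unfolding stopping_time_def pred_def space_before_filtration
  by (intro allI before_filtration_setsI sets_before_occurred) simp

lemma prog_enlargement_in_sets_before:
  assumes F: "filtration_on \<Omega> F" and "0 \<le> t" "t < s"
  shows "sets (prog_enlargement \<Omega> F \<theta> t) \<subseteq> sets_before \<Omega> F \<theta> s"
proof -
  have "sets (prog_enlargement \<Omega> F \<theta> t) \<subseteq> sets (before_filtration \<Omega> F \<theta> t)"
    using filtration_on_before_filtration right_continuous_before_filtration[OF F]
      sets_subset_before_filtration[OF F] stopping_time_before_filtration \<open>0 \<le> t\<close>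
    by (intro prog_enlargement_subset) auto
  also have "\<dots> \<subseteq> sets_before \<Omega> F \<theta> s"
    using before_filtration_in_sets_before[OF assms] .
  finally show ?thesis .
qed

lemma space_prog_enlargement: "space (prog_enlargement \<Omega> F \<theta> t) = \<Omega>"
  by (simp add: prog_enlargement_def space_measure_of_conv)

lemma stopping_time_less_in_sets_before:
  assumes F: "filtration_on \<Omega> F" and \<tau>: "stopping_time (prog_enlargement \<Omega> F \<theta>) \<tau>"
    and pos: "\<forall>\<omega>\<in>\<Omega>. 0 \<le> \<tau> \<omega>" and q: "0 \<le> q"
  shows "{\<omega>\<in>\<Omega>. \<tau> \<omega> < q} \<in> sets_before \<Omega> F \<theta> q"
proof -
  interpret sigma_algebra \<Omega> "sets_before \<Omega> F \<theta> q" using sigma_algebra_sets_before[OF F q] .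
  let ?R = "\<rat> \<inter> {0..<q}"
  \<comment> \<open>G_r only embeds into sets_before s for s > r, hence the strict inequality \<tau> < q\<close>
  have "{\<omega>\<in>\<Omega>. \<tau> \<omega> < q} = (\<Union>r\<in>?R. {\<omega>\<in>\<Omega>. \<tau> \<omega> \<le> r})"
  proof (intro equalityI subsetI)
    fix \<omega> assume \<omega>: "\<omega> \<in> {\<omega>\<in>\<Omega>. \<tau> \<omega> < q}"
    then obtain r where "r \<in> \<rat>" "\<tau> \<omega> < r" "r < q" using Rats_dense_in_real by blast
    moreover have "0 \<le> \<tau> \<omega>" using \<omega> pos by blast
    ultimately have "r \<in> ?R" "\<tau> \<omega> \<le> r" by auto
    then show "\<omega> \<in> (\<Union>r\<in>?R. {\<omega>\<in>\<Omega>. \<tau> \<omega> \<le> r})" using \<omega> by blast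
  qed auto
  also have "\<dots> \<in> sets_before \<Omega> F \<theta> q"
  proof (rule countable_UN')
    show "countable ?R" by (simp add: countable_rat)
    show "(\<lambda>r. {\<omega>\<in>\<Omega>. \<tau> \<omega> \<le> r}) ` ?R \<subseteq> sets_before \<Omega> F \<theta> q"
    proof (rule image_subsetI)
      fix r assume r: "r \<in> ?R"
      have "{\<omega>\<in>\<Omega>. \<tau> \<omega> \<le> r} \<in> sets (prog_enlargement \<Omega> F \<theta> r)"
        using stopping_timeD[OF \<tau>, of r] by (simp add: pred_def space_prog_enlargement)
      then show "{\<omega>\<in>\<Omega>. \<tau> \<omega> \<le> r} \<in> sets_before \<Omega> F \<theta> q"
        using prog_enlargement_in_sets_before[OF F, of r q] r by auto
    qed
  qed
  finally show ?thesis .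
qed

lemma Inf_insert_min_eq:
  fixes S :: "real set"
  assumes bdd: "bdd_below S" and "\<tau> \<le> T"
    and below: "\<And>q. q \<in> S \<Longrightarrow> q < \<theta> \<Longrightarrow> \<tau> < q"
    and above: "\<And>q. q \<in> \<rat> \<Longrightarrow> \<tau> < q \<Longrightarrow> q < \<theta> \<Longrightarrow> q \<in> S"
  shows "min (Inf (insert T S)) \<theta> = min \<tau> \<theta>"
proof -
  let ?I = "Inf (insert T S)"
  have "min \<tau> \<theta> \<le> x" if "x \<in> insert T S" for x
    using that below[of x] \<open>\<tau> \<le> T\<close> by (cases "x < \<theta>") (auto simp: min_le_iff_disj)
  then have lower: "min \<tau> \<theta> \<le> ?I" by (intro cInf_greatest) auto
  have upper: "?I \<le> \<tau>" if \<tau>\<theta>: "\<tau> < \<theta>"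
  proof (rule ccontr)
    assume "\<not> ?I \<le> \<tau>"
    then obtain q where q: "q \<in> \<rat>" "\<tau> < q" "q < min ?I \<theta>"
      using Rats_dense_in_real[of \<tau> "min ?I \<theta>"] \<tau>\<theta> by auto
    then have "q \<in> S" by (intro above) auto
    then have "?I \<le> q" using bdd by (intro cInf_lower) auto
    then show False using q(3) by simp
  qed
  show ?thesis
  proof (cases "\<tau> < \<theta>")
    case True
    then show ?thesis using lower upper by (simp add: min_def)
  next
    case False
    then have "min \<tau> \<theta> = \<theta>" by simp
    then show ?thesis using lower by (simp add: min_absorb2)
  qed
qed

definition rational_debut :: "real \<Rightarrow> (real \<Rightarrow> 'a set) \<Rightarrow> 'a \<Rightarrow> real" where
  "rational_debut T A \<omega> = Inf (insert T {q \<in> \<rat> \<inter> {0..}. \<omega> \<in> A q})"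

lemma bdd_below_rational_debut: "0 \<le> T \<Longrightarrow> bdd_below (insert T {q \<in> \<rat> \<inter> {0..}. \<omega> \<in> A q})"
  by (intro bdd_belowI[of _ 0]) auto

lemma rational_debut_bounds:
  assumes "0 \<le> T" shows "rational_debut T A \<omega> \<in> {0..T}"
proof -
  let ?S = "insert T {q \<in> \<rat> \<inter> {0..}. \<omega> \<in> A q}"
  have "0 \<le> Inf ?S" using assms by (intro cInf_greatest) auto
  moreover have "Inf ?S \<le> T" using bdd_below_rational_debut[OF assms] by (rule cInf_lower[rotated]) simp
  ultimately show ?thesis by (simp add: rational_debut_def)
qed

lemma stopping_time_rational_debut:
  assumes F: "filtration_on \<Omega> F" and rc: "right_continuous_filtration F" and T: "0 \<le> T"
    and A: "\<And>q. q \<in> \<rat> \<Longrightarrow> 0 \<le> q \<Longrightarrow> A q \<in> sets (F q)"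
  shows "stopping_time F (rational_debut T A)"
proof (rule stopping_time_of_less_sets[OF F rc])
  show "0 \<le> rational_debut T A \<omega>" for \<omega> using rational_debut_bounds[OF T, of A \<omega>] by simp
  fix t :: real assume t: "0 \<le> t"
  let ?D = "\<rat> \<inter> {0..<t}"
  have "rational_debut T A \<omega> < t \<longleftrightarrow> T < t \<or> (\<exists>q\<in>?D. \<omega> \<in> A q)" for \<omega>
    unfolding rational_debut_def cInf_less_iff[OF insert_not_empty bdd_below_rational_debut[OF T]]
    by auto
  moreover have "A q \<subseteq> \<Omega>" if "q \<in> ?D" for q
  proof -
    from that have "q \<in> \<rat>" "0 \<le> q" by auto
    then show ?thesis using filtration_on_sets_into_space[OF F _ A] by blast
  qed
  ultimately have "{\<omega>\<in>\<Omega>. rational_debut T A \<omega> < t} = {\<omega>\<in>\<Omega>. T < t} \<union> (\<Union>q\<in>?D. A q)"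
    by blast
  also have "\<dots> \<in> sets (F t)"
  proof (rule sets.Un)
    show "{\<omega>\<in>\<Omega>. T < t} \<in> sets (F t)"
      using filtration_on_space[OF F t] by (cases "T < t") auto
    show "(\<Union>q\<in>?D. A q) \<in> sets (F t)"
    proof (rule sets.countable_UN')
      show "countable ?D" by (simp add: countable_rat)
      show "A ` ?D \<subseteq> sets (F t)"
      proof (rule image_subsetI)
        fix q assume "q \<in> ?D"
        then have "q \<in> \<rat>" "0 \<le> q" "q \<le> t" by auto
        then show "A q \<in> sets (F t)" using filtration_on_mono[OF F _ _ A] by blast
      qed
    qed
  qed
  finally show "{\<omega>\<in>\<Omega>. rational_debut T A \<omega> < t} \<in> sets (F t)" .
qed

lemma events_agreeing_before_stopping_time_less:
  assumes F: "filtration_on \<Omega> F" and \<tau>: "stopping_time (prog_enlargement \<Omega> F \<theta>) \<tau>"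
    and pos: "\<forall>\<omega>\<in>\<Omega>. 0 \<le> \<tau> \<omega>"
  obtains A where "\<And>q. q \<in> \<rat> \<Longrightarrow> 0 \<le> q \<Longrightarrow> A q \<in> sets (F q)"
    and "\<And>q \<omega>. q \<in> \<rat> \<Longrightarrow> 0 \<le> q \<Longrightarrow> \<omega> \<in> \<Omega> \<Longrightarrow> q < \<theta> \<omega> \<Longrightarrow> \<omega> \<in> A q \<longleftrightarrow> \<tau> \<omega> < q"
proof -
  have "\<forall>q\<in>\<rat> \<inter> {0::real..}. \<exists>A. A \<in> sets (F q) \<and> (\<forall>\<omega>\<in>\<Omega>. q < \<theta> \<omega> \<longrightarrow> (\<omega> \<in> A \<longleftrightarrow> \<tau> \<omega> < q))"
  proof
    fix q :: real assume "q \<in> \<rat> \<inter> {0..}"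
    then have "{\<omega>\<in>\<Omega>. \<tau> \<omega> < q} \<in> sets_before \<Omega> F \<theta> q"
      using stopping_time_less_in_sets_before[OF F \<tau> pos] by simp
    then show "\<exists>A. A \<in> sets (F q) \<and> (\<forall>\<omega>\<in>\<Omega>. q < \<theta> \<omega> \<longrightarrow> (\<omega> \<in> A \<longleftrightarrow> \<tau> \<omega> < q))"
      unfolding sets_before_def by auto
  qed
  from bchoice[OF this] obtain A
    where "\<forall>q\<in>\<rat> \<inter> {0..}. A q \<in> sets (F q) \<and> (\<forall>\<omega>\<in>\<Omega>. q < \<theta> \<omega> \<longrightarrow> (\<omega> \<in> A q \<longleftrightarrow> \<tau> \<omega> < q))"
    by blast
  then show ?thesis by (intro that[of A]) auto
qed

lemma stopping_time_agreeing_before: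
  assumes F: "filtration_on \<Omega> F" and rc: "right_continuous_filtration F" and T: "0 \<le> T"
    and \<tau>: "stopping_time (prog_enlargement \<Omega> F \<theta>) \<tau>" and \<tau>T: "\<forall>\<omega>\<in>\<Omega>. \<tau> \<omega> \<in> {0..T}"
  obtains \<sigma> where "stopping_time F \<sigma>" "\<forall>\<omega>\<in>\<Omega>. \<sigma> \<omega> \<in> {0..T}"
    "\<forall>\<omega>\<in>\<Omega>. min (\<sigma> \<omega>) (\<theta> \<omega>) = min (\<tau> \<omega>) (\<theta> \<omega>)"
proof -
  let ?D = "\<rat> \<inter> {0::real..}"
  have pos: "\<forall>\<omega>\<in>\<Omega>. 0 \<le> \<tau> \<omega>" using \<tau>T by simp
  obtain A where A: "\<And>q. q \<in> \<rat> \<Longrightarrow> 0 \<le> q \<Longrightarrow> A q \<in> sets (F q)"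
    and agree: "\<And>q \<omega>. q \<in> \<rat> \<Longrightarrow> 0 \<le> q \<Longrightarrow> \<omega> \<in> \<Omega> \<Longrightarrow> q < \<theta> \<omega> \<Longrightarrow> \<omega> \<in> A q \<longleftrightarrow> \<tau> \<omega> < q"
    using events_agreeing_before_stopping_time_less[OF F \<tau> pos] by blast
  show ?thesis
  proof (rule that)
    show "stopping_time F (rational_debut T A)" using stopping_time_rational_debut[OF F rc T A] .
    show "\<forall>\<omega>\<in>\<Omega>. rational_debut T A \<omega> \<in> {0..T}" by (intro ballI rational_debut_bounds[OF T])
    show "\<forall>\<omega>\<in>\<Omega>. min (rational_debut T A \<omega>) (\<theta> \<omega>) = min (\<tau> \<omega>) (\<theta> \<omega>)"
    proof
      fix \<omega> assume \<omega>: "\<omega> \<in> \<Omega>"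
      show "min (rational_debut T A \<omega>) (\<theta> \<omega>) = min (\<tau> \<omega>) (\<theta> \<omega>)"
        unfolding rational_debut_def
      proof (rule Inf_insert_min_eq)
        show "bdd_below {q \<in> ?D. \<omega> \<in> A q}"
          using bdd_below_rational_debut[OF T] by (rule bdd_below_mono) auto
        show "\<tau> \<omega> \<le> T" using \<tau>T \<omega> by auto
        show "\<tau> \<omega> < q" if "q \<in> {q \<in> ?D. \<omega> \<in> A q}" "q < \<theta> \<omega>" for q
          using that agree[OF _ _ \<omega>] by auto
        show "q \<in> {q \<in> ?D. \<omega> \<in> A q}" if "q \<in> \<rat>" "\<tau> \<omega> < q" "q < \<theta> \<omega>" for q
        proof -
          have "0 \<le> q" using that pos \<omega> by force
          then show ?thesis using that agree[OF _ _ \<omega>] by auto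
        qed
      qed
    qed
  qed
qed

lemma space_stopped_filtration: "space (stopped_filtration \<Omega> F \<sigma> t) = \<Omega>"
  by (simp add: stopped_filtration_def stopped_sigma_def space_measure_of_conv)

lemma stopped_filtration_setsI:
  assumes "A \<subseteq> \<Omega>" "\<And>u. 0 \<le> u \<Longrightarrow> {\<omega>\<in>A. min (\<sigma> \<omega>) t \<le> u} \<in> sets (F u)"
  shows "A \<in> sets (stopped_filtration \<Omega> F \<sigma> t)"
  unfolding stopped_filtration_def stopped_sigma_def
  by (subst sets_measure_of) (use assms in \<open>auto intro!: sigma_sets.Basic\<close>)

lemma stopping_time_stopped_filtrationI:
  assumes pos: "\<forall>\<omega>\<in>\<Omega>. 0 \<le> \<rho> \<omega>"
    and sets: "\<And>t u. 0 \<le> t \<Longrightarrow> 0 \<le> u \<Longrightarrow> {\<omega>\<in>\<Omega>. \<rho> \<omega> \<le> t \<and> min (\<sigma> \<omega>) t \<le> u} \<in> sets (F u)"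
  shows "stopping_time (stopped_filtration \<Omega> F \<sigma>) \<rho>"
proof
  fix t :: real
  have "{\<omega>\<in>\<Omega>. \<rho> \<omega> \<le> t} \<in> sets (stopped_filtration \<Omega> F \<sigma> t)"
  proof (cases "t < 0")
    case True
    then have "{\<omega>\<in>\<Omega>. \<rho> \<omega> \<le> t} = {}" using pos by force
    then show ?thesis by (metis sets.empty_sets)
  next
    case False
    show ?thesis
    proof (rule stopped_filtration_setsI)
      fix u :: real assume "0 \<le> u"
      have "{\<omega>\<in>{\<omega>\<in>\<Omega>. \<rho> \<omega> \<le> t}. min (\<sigma> \<omega>) t \<le> u} = {\<omega>\<in>\<Omega>. \<rho> \<omega> \<le> t \<and> min (\<sigma> \<omega>) t \<le> u}"
        by blast
      then show "{\<omega>\<in>{\<omega>\<in>\<Omega>. \<rho> \<omega> \<le> t}. min (\<sigma> \<omega>) t \<le> u} \<in> sets (F u)"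
        using sets[of t u] False \<open>0 \<le> u\<close> by simp
    qed auto
  qed
  then show "Measurable.pred (stopped_filtration \<Omega> F \<sigma> t) (\<lambda>\<omega>. \<rho> \<omega> \<le> t)"
    by (simp add: pred_def space_stopped_filtration)
qed

lemma stopping_time_stopped_filtration_add:
  assumes F: "filtration_on \<Omega> F" and \<sigma>: "stopping_time F \<sigma>" and pos: "\<forall>\<omega>\<in>\<Omega>. 0 \<le> \<sigma> \<omega>"
    and e: "0 < e"
  shows "stopping_time (stopped_filtration \<Omega> F \<sigma>) (\<lambda>\<omega>. \<sigma> \<omega> + e)"
proof (rule stopping_time_stopped_filtrationI)
  show "\<forall>\<omega>\<in>\<Omega>. 0 \<le> \<sigma> \<omega> + e" using pos e by auto
  fix t u :: real assume "0 \<le> t" "0 \<le> u"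
  have eq: "{\<omega>\<in>\<Omega>. \<sigma> \<omega> + e \<le> t \<and> min (\<sigma> \<omega>) t \<le> u} = {\<omega>\<in>\<Omega>. \<sigma> \<omega> \<le> min (t - e) u}"
    using e by auto
  show "{\<omega>\<in>\<Omega>. \<sigma> \<omega> + e \<le> t \<and> min (\<sigma> \<omega>) t \<le> u} \<in> sets (F u)"
  proof (cases "min (t - e) u < 0")
    case True
    then have "{\<omega>\<in>\<Omega>. \<sigma> \<omega> \<le> min (t - e) u} = {}" using pos by force
    then show ?thesis unfolding eq by (metis sets.empty_sets)
  next
    case False
    then show ?thesis unfolding eq by (intro stopping_time_le_sets[OF F \<sigma>]) auto
  qed
qed

lemma stopping_time_stopped_filtration_cut:
  assumes F: "filtration_on \<Omega> F" and \<sigma>: "stopping_time F \<sigma>" and \<rho>: "stopping_time F \<rho>"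
    and \<sigma>c: "\<forall>\<omega>\<in>\<Omega>. 0 \<le> \<sigma> \<omega> \<and> \<sigma> \<omega> \<le> c" and pos: "\<forall>\<omega>\<in>\<Omega>. 0 \<le> \<rho> \<omega>"
  shows "stopping_time (stopped_filtration \<Omega> F \<sigma>) (\<lambda>\<omega>. if \<rho> \<omega> \<le> \<sigma> \<omega> then \<rho> \<omega> else c)"
proof (rule stopping_time_stopped_filtrationI)
  show "\<forall>\<omega>\<in>\<Omega>. 0 \<le> (if \<rho> \<omega> \<le> \<sigma> \<omega> then \<rho> \<omega> else c)" using \<sigma>c pos by auto
  fix t u :: real assume t: "0 \<le> t" and u: "0 \<le> u"
  define E where "E s = {\<omega>\<in>\<Omega>. \<sigma> \<omega> < \<rho> \<omega> \<and> \<sigma> \<omega> \<le> s}" for s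
  have E: "E s \<in> sets (F s)" if "0 \<le> s" for s
    unfolding E_def using stopping_time_less_le_sets[OF F \<sigma> \<rho> _ pos that] \<sigma>c by simp
  let ?L = "{\<omega>\<in>\<Omega>. (if \<rho> \<omega> \<le> \<sigma> \<omega> then \<rho> \<omega> else c) \<le> t \<and> min (\<sigma> \<omega>) t \<le> u}"
  show "?L \<in> sets (F u)"
  proof (cases "t \<le> u")
    case True
    then have "?L = ({\<omega>\<in>\<Omega>. \<rho> \<omega> \<le> t} - E t) \<union> (if c \<le> t then E t else {})"
      using \<sigma>c by (auto simp: E_def)
    also have "\<dots> \<in> sets (F t)"
      using E[OF t] stopping_time_le_sets[OF F \<rho> t order_refl] by auto
    finally show ?thesis by (rule filtration_on_mono[OF F t True])
  next
    case False
    then have "?L = ({\<omega>\<in>\<Omega>. \<sigma> \<omega> \<le> u} - E u) \<union> (if c \<le> t then E u else {})"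
      using \<sigma>c by (auto simp: E_def)
    also have "\<dots> \<in> sets (F u)"
      using E[OF u] stopping_time_le_sets[OF F \<sigma> u order_refl] by auto
    finally show ?thesis .
  qed
qed

lemma space_optional_measure: "space (optional_measure \<Omega> F) = {0..} \<times> \<Omega>"
  by (simp add: optional_measure_def space_measure_of_conv)

lemma stochastic_interval_optional:
  assumes "stopping_time F \<rho>" "\<forall>\<omega>\<in>\<Omega>. 0 \<le> \<rho> \<omega>"
  shows "{(t, \<omega>). 0 \<le> t \<and> \<omega> \<in> \<Omega> \<and> \<rho> \<omega> \<le> t} \<in> sets (optional_measure \<Omega> F)"
  unfolding optional_measure_def
  by (subst sets_measure_of) (use assms in \<open>auto intro!: sigma_sets.Basic\<close>)

lemma strict_stochastic_interval_stopped_optional: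
  assumes F: "filtration_on \<Omega> F" and \<sigma>: "stopping_time F \<sigma>" and pos: "\<forall>\<omega>\<in>\<Omega>. 0 \<le> \<sigma> \<omega>"
  shows "{(t, \<omega>). 0 \<le> t \<and> \<omega> \<in> \<Omega> \<and> \<sigma> \<omega> < t} \<in> sets (optional_measure \<Omega> (stopped_filtration \<Omega> F \<sigma>))"
proof -
  let ?G = "\<lambda>n::nat. {(t, \<omega>). 0 \<le> t \<and> \<omega> \<in> \<Omega> \<and> \<sigma> \<omega> + inverse (Suc n) \<le> t}"
  have "{(t, \<omega>). 0 \<le> t \<and> \<omega> \<in> \<Omega> \<and> \<sigma> \<omega> < t} = (\<Union>n. ?G n)"
  proof (intro equalityI subsetI)
    fix p assume "p \<in> {(t, \<omega>). 0 \<le> t \<and> \<omega> \<in> \<Omega> \<and> \<sigma> \<omega> < t}"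
    moreover obtain n where "inverse (Suc n) < fst p - \<sigma> (snd p)"
      using calculation reals_Archimedean[of "fst p - \<sigma> (snd p)"] by auto
    ultimately have "p \<in> ?G n" by auto
    then show "p \<in> (\<Union>n. ?G n)" by blast
  next
    fix p assume "p \<in> (\<Union>n. ?G n)"
    then obtain n t \<omega> where p: "p = (t, \<omega>)" "0 \<le> t" "\<omega> \<in> \<Omega>"
      and "\<sigma> \<omega> + inverse (real (Suc n)) \<le> t" by blast
    moreover have "0 < inverse (real (Suc n))" by simp
    ultimately have "\<sigma> \<omega> < t" by linarith
    then show "p \<in> {(t, \<omega>). 0 \<le> t \<and> \<omega> \<in> \<Omega> \<and> \<sigma> \<omega> < t}" using p by simp
  qed
  also have "\<dots> \<in> sets (optional_measure \<Omega> (stopped_filtration \<Omega> F \<sigma>))"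
  proof (intro sets.countable_UN image_subsetI)
    fix n
    have "0 < inverse (real (Suc n))" by simp
    from stochastic_interval_optional[OF stopping_time_stopped_filtration_add[OF F \<sigma> pos this]]
    show "?G n \<in> sets (optional_measure \<Omega> (stopped_filtration \<Omega> F \<sigma>))"
      using pos \<open>0 < inverse (real (Suc n))\<close> by simp
  qed
  finally show ?thesis .
qed

lemma measurable_stop_optional:
  assumes F: "filtration_on \<Omega> F" and \<sigma>: "stopping_time F \<sigma>"
    and \<sigma>T: "\<forall>\<omega>\<in>\<Omega>. 0 \<le> \<sigma> \<omega> \<and> \<sigma> \<omega> \<le> T"
  shows "(\<lambda>(t, \<omega>). (min t (\<sigma> \<omega>), \<omega>))
    \<in> optional_measure \<Omega> (stopped_filtration \<Omega> F \<sigma>) \<rightarrow>\<^sub>M optional_measure \<Omega> F"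
  unfolding optional_measure_def[of \<Omega> F]
proof (rule measurable_measure_of)
  let ?M = "optional_measure \<Omega> (stopped_filtration \<Omega> F \<sigma>)"
  let ?stop = "\<lambda>(t, \<omega>). (min t (\<sigma> \<omega>), \<omega>)"
  show "?stop \<in> space ?M \<rightarrow> {0..} \<times> \<Omega>"
    using \<sigma>T by (auto simp: space_optional_measure)
  fix y assume "y \<in> {{(t, \<omega>). 0 \<le> t \<and> \<omega> \<in> \<Omega> \<and> \<rho> \<omega> \<le> t} | \<rho>.
    stopping_time F \<rho> \<and> (\<forall>\<omega>\<in>\<Omega>. 0 \<le> \<rho> \<omega>)}"
  then obtain \<rho> where y: "y = {(t, \<omega>). 0 \<le> t \<and> \<omega> \<in> \<Omega> \<and> \<rho> \<omega> \<le> t}"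
    and \<rho>: "stopping_time F \<rho>" and \<rho>_pos: "\<forall>\<omega>\<in>\<Omega>. 0 \<le> \<rho> \<omega>" by blast
  define G where "G n = {(t, \<omega>). 0 \<le> t \<and> \<omega> \<in> \<Omega> \<and> (if \<rho> \<omega> \<le> \<sigma> \<omega> then \<rho> \<omega> else T + real n) \<le> t}"
    for n :: nat
  define K where "K n = {(t, \<omega>). 0 \<le> t \<and> \<omega> \<in> \<Omega> \<and> T + real n \<le> t}" for n :: nat
  have G: "G n \<in> sets ?M" for n
  proof -
    have "\<forall>\<omega>\<in>\<Omega>. 0 \<le> \<sigma> \<omega> \<and> \<sigma> \<omega> \<le> T + real n" using \<sigma>T by force
    from stopping_time_stopped_filtration_cut[OF F \<sigma> \<rho> this \<rho>_pos]
    show ?thesis unfolding G_def using \<sigma>T \<rho>_pos by (intro stochastic_interval_optional) force+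
  qed
  have K: "K n \<in> sets ?M" for n
    unfolding K_def using \<sigma>T by (intro stochastic_interval_optional stopping_time_const) force
  \<comment> \<open>off {\<rho> \<le> \<sigma>}, a point of G n has t \<ge> T + n, i.e. lies in K n\<close>
  have "?stop -` y \<inter> space ?M = (\<Union>n. G n - K n)"
  proof (intro equalityI subsetI)
    fix p assume "p \<in> ?stop -` y \<inter> space ?M"
    then obtain t \<omega> where p: "p = (t, \<omega>)" "0 \<le> t" "\<omega> \<in> \<Omega>" "\<rho> \<omega> \<le> t" "\<rho> \<omega> \<le> \<sigma> \<omega>"
      using y by (auto simp: space_optional_measure)
    obtain n :: nat where "t - T < real n" using reals_Archimedean2 by blast
    then have "p \<in> G n - K n" using p by (auto simp: G_def K_def)
    then show "p \<in> (\<Union>n. G n - K n)" by blast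
  next
    fix p assume "p \<in> (\<Union>n. G n - K n)"
    then show "p \<in> ?stop -` y \<inter> space ?M"
      using y \<sigma>T by (auto simp: G_def K_def space_optional_measure split: if_splits)
  qed
  also have "\<dots> \<in> sets ?M" using G K by (intro sets.countable_UN) auto
  finally show "?stop -` y \<inter> space ?M \<in> sets ?M" .
qed auto

lemma optional_process_stopped:
  assumes "filtration_on \<Omega> F" "stopping_time F \<sigma>" "\<forall>\<omega>\<in>\<Omega>. 0 \<le> \<sigma> \<omega> \<and> \<sigma> \<omega> \<le> T"
    and "optional_process \<Omega> F X"
  shows "optional_process \<Omega> (stopped_filtration \<Omega> F \<sigma>) (\<lambda>t \<omega>. X (min t (\<sigma> \<omega>)) \<omega>)"
  using measurable_comp[OF measurable_stop_optional[OF assms(1-3)] assms(4)[unfolded optional_process_def]]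
  by (simp add: optional_process_def comp_def case_prod_beta)

lemma payoff_at_stopping_time_optional:
  assumes F: "filtration_on \<Omega> F" and \<sigma>: "stopping_time F \<sigma>"
    and \<sigma>T: "\<forall>\<omega>\<in>\<Omega>. 0 \<le> \<sigma> \<omega> \<and> \<sigma> \<omega> \<le> T"
    and P: "optional_process \<Omega> F P" and R: "optional_process \<Omega> F R"
  obtains x where "optional_process \<Omega> (stopped_filtration \<Omega> F \<sigma>) x"
    "\<forall>\<omega>\<in>\<Omega>. payoff P R \<theta> (\<sigma> \<omega>) \<omega> = x (\<theta> \<omega>) \<omega>"
proof
  let ?M = "optional_measure \<Omega> (stopped_filtration \<Omega> F \<sigma>)"
  let ?after = "{(t, \<omega>). 0 \<le> t \<and> \<omega> \<in> \<Omega> \<and> \<sigma> \<omega> < t}"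
  let ?x = "\<lambda>t \<omega>. if (t, \<omega>) \<in> ?after then P (min t (\<sigma> \<omega>)) \<omega> else R (min t (\<sigma> \<omega>)) \<omega>"
  have "(\<lambda>p. if p \<in> ?after then P (min (fst p) (\<sigma> (snd p))) (snd p) else R (min (fst p) (\<sigma> (snd p))) (snd p))
    \<in> borel_measurable ?M"
  proof (rule measurable_If_set)
    show "(\<lambda>p. P (min (fst p) (\<sigma> (snd p))) (snd p)) \<in> borel_measurable ?M"
      using optional_process_stopped[OF F \<sigma> \<sigma>T P] by (simp add: optional_process_def)
    show "(\<lambda>p. R (min (fst p) (\<sigma> (snd p))) (snd p)) \<in> borel_measurable ?M"
      using optional_process_stopped[OF F \<sigma> \<sigma>T R] by (simp add: optional_process_def)
    have "?after \<in> sets ?M" using strict_stochastic_interval_stopped_optional[OF F \<sigma>] \<sigma>T by simp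
    then show "?after \<inter> space ?M \<in> sets ?M" by (simp add: space_optional_measure Int_absorb2 subset_eq)
  qed
  then show "optional_process \<Omega> (stopped_filtration \<Omega> F \<sigma>) ?x"
    by (simp add: optional_process_def case_prod_beta)
  show "\<forall>\<omega>\<in>\<Omega>. payoff P R \<theta> (\<sigma> \<omega>) \<omega> = ?x (\<theta> \<omega>) \<omega>"
    using \<sigma>T by (auto simp: payoff_def min_def)
qed

lemma payoff_min: "payoff P R \<theta> (min u (\<theta> \<omega>)) \<omega> = payoff P R \<theta> u \<omega>"
  by (simp add: payoff_def min_def)

theorem lemma3p1:
  fixes M :: "'a measure" and F :: "real \<Rightarrow> 'a measure" and \<theta> :: "'a \<Rightarrow> real"
    and P R :: "real \<Rightarrow> 'a \<Rightarrow> real" and T :: real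
  assumes "prob_space M"
    and "usual_conditions M F"
    and "\<theta> \<in> borel_measurable M" and "\<forall>\<omega>\<in>space M. 0 < \<theta> \<omega>"
    and "T > 0"
    and "optional_process (space M) F P" and "bounded_process (space M) P"
    and "optional_process (space M) F R" and "bounded_process (space M) R"
  shows "(\<forall>\<sigma>h. stopping_time (prog_enlargement (space M) F \<theta>) \<sigma>h \<and>
              (\<forall>\<omega>\<in>space M. \<sigma>h \<omega> \<in> {0..T}) \<longrightarrow>
            (\<exists>\<sigma>. stopping_time F \<sigma> \<and> (\<forall>\<omega>\<in>space M. \<sigma> \<omega> \<in> {0..T}) \<and>
              (AE \<omega> in M. payoff P R \<theta> (\<sigma>h \<omega>) \<omega> = payoff P R \<theta> (min (\<sigma> \<omega>) (\<theta> \<omega>)) \<omega> \<and>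
                           payoff P R \<theta> (min (\<sigma> \<omega>) (\<theta> \<omega>)) \<omega> = payoff P R \<theta> (\<sigma> \<omega>) \<omega>)))
       \<and> (\<forall>\<sigma>. stopping_time F \<sigma> \<and> (\<forall>\<omega>\<in>space M. \<sigma> \<omega> \<in> {0..T}) \<longrightarrow>
            (\<exists>x. optional_process (space M) (stopped_filtration (space M) F \<sigma>) x \<and>
              (AE \<omega> in M. payoff P R \<theta> (\<sigma> \<omega>) \<omega> = x (\<theta> \<omega>) \<omega>)))"
proof -
  have F: "filtration_on (space M) F" and rc: "right_continuous_filtration F"
    using assms(2) by (auto simp: usual_conditions_def)
  have T: "0 \<le> T" using \<open>T > 0\<close> by simp
  show ?thesis
  proof (intro conjI allI impI)
    fix \<tau> assume "stopping_time (prog_enlargement (space M) F \<theta>) \<tau> \<and> (\<forall>\<omega>\<in>space M. \<tau> \<omega> \<in> {0..T})"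
    then obtain \<sigma> where \<sigma>: "stopping_time F \<sigma>" "\<forall>\<omega>\<in>space M. \<sigma> \<omega> \<in> {0..T}"
      and agree: "\<forall>\<omega>\<in>space M. min (\<sigma> \<omega>) (\<theta> \<omega>) = min (\<tau> \<omega>) (\<theta> \<omega>)"
      using stopping_time_agreeing_before[OF F rc T] by blast
    have "AE \<omega> in M. payoff P R \<theta> (\<tau> \<omega>) \<omega> = payoff P R \<theta> (min (\<sigma> \<omega>) (\<theta> \<omega>)) \<omega> \<and>
      payoff P R \<theta> (min (\<sigma> \<omega>) (\<theta> \<omega>)) \<omega> = payoff P R \<theta> (\<sigma> \<omega>) \<omega>"
      using agree by (intro AE_I2) (metis payoff_min)
    with \<sigma> show "\<exists>\<sigma>. stopping_time F \<sigma> \<and> (\<forall>\<omega>\<in>space M. \<sigma> \<omega> \<in> {0..T}) \<and>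
      (AE \<omega> in M. payoff P R \<theta> (\<tau> \<omega>) \<omega> = payoff P R \<theta> (min (\<sigma> \<omega>) (\<theta> \<omega>)) \<omega> \<and>
        payoff P R \<theta> (min (\<sigma> \<omega>) (\<theta> \<omega>)) \<omega> = payoff P R \<theta> (\<sigma> \<omega>) \<omega>)"
      by blast
  next
    fix \<sigma> assume \<sigma>: "stopping_time F \<sigma> \<and> (\<forall>\<omega>\<in>space M. \<sigma> \<omega> \<in> {0..T})"
    then obtain x where "optional_process (space M) (stopped_filtration (space M) F \<sigma>) x"
      "\<forall>\<omega>\<in>space M. payoff P R \<theta> (\<sigma> \<omega>) \<omega> = x (\<theta> \<omega>) \<omega>"
      using payoff_at_stopping_time_optional[OF F _ _ assms(6,8)] by (metis atLeastAtMost_iff)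
    then show "\<exists>x. optional_process (space M) (stopped_filtration (space M) F \<sigma>) x \<and>
      (AE \<omega> in M. payoff P R \<theta> (\<sigma> \<omega>) \<omega> = x (\<theta> \<omega>) \<omega>)"
      by (blast intro: AE_I2)
  qed
qed

end
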